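(* Let $\hat\tau$ be a $\widehat{\mathbb{Z}}$-tropical type of genus $g$ inducing essential types. Then $$0\le k_{\hat\tau}\le\max(2g-1,0),\qquad\text{where } k_{\hat\tau}=b_1(\Gamma)+2\sum_{v\in V_+}g_v-|V_+|.$$
   Context: A $\widehat{\mathbb{Z}}$-tropical type $\hat\tau$ consists of a graph $\Gamma$ (vertices $V$, edges $E$, $n$ legs) with genera $g_v\ge0$ satisfying $\sum_vg_v+b_1(\Gamma)=g$, degrees $d_v\in\mathbb{Z}$, a partition $V=V_0\sqcup V_+$ into external and internal vertices, and slopes $m_{\vec e}=-m_{\overleftarrow e}\in\widehat{\mathbb{Z}}$ satisfying balancing $d_v=\sum_{e\ni v}m_{\vec e}+\sum_{\text{legs }i\text{ at }v}c_i$ in $\widehat{\mathbb{Z}}$ (for given coarse contact orders $c_i$). It induces essential types if every edge joins a vertex of $V_0$ to a vertex of $V_+$ and every $v\in V_+$ has $g_v>0$. *)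

theory Defs
  imports Main
begin

text \<open>An element of the profinite completion of the integers is represented as a
compatible family of residues: for every n \<ge> 1 a residue a n in {0..<n}, with
a n mod m = a m whenever m dvd n (the component at 0 is normalised to 0).\<close>

type_synonym zhat = "nat \<Rightarrow> int"

definition Zhat :: "zhat set" where
  "Zhat = {a. a 0 = 0 \<and> (\<forall>n\<ge>1. 0 \<le> a n \<and> a n < int n)
              \<and> (\<forall>m n. 1 \<le> m \<longrightarrow> m dvd n \<longrightarrow> 1 \<le> n \<longrightarrow> a n mod int m = a m)}"

definition zhat_of_int :: "int \<Rightarrow> zhat" where
  "zhat_of_int k = (\<lambda>n. if n = 0 then 0 else k mod int n)"

definition zhat_neg :: "zhat \<Rightarrow> zhat" where
  "zhat_neg a = (\<lambda>n. if n = 0 then 0 else (- a n) mod int n)"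

definition zhat_sum :: "('i \<Rightarrow> zhat) \<Rightarrow> 'i set \<Rightarrow> zhat" where
  "zhat_sum f I = (\<lambda>n. if n = 0 then 0 else (\<Sum>i\<in>I. f i n) mod int n)"

definition zhat_add :: "zhat \<Rightarrow> zhat \<Rightarrow> zhat" where
  "zhat_add a b = (\<lambda>n. if n = 0 then 0 else (a n + b n) mod int n)"

text \<open>A graph: finite vertex set V, finite edge set E, each edge e with a chosen
orientation ends e = (source, target) (loops and multi-edges allowed).\<close>

definition conn_rel :: "'v set \<Rightarrow> 'e set \<Rightarrow> ('e \<Rightarrow> 'v \<times> 'v) \<Rightarrow> ('v \<times> 'v) set" where
  "conn_rel V E ends =
     Id_on V \<union> ((\<lambda>e. ends e) ` E \<union> (\<lambda>e. prod.swap (ends e)) ` E)\<^sup>+"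

definition n_components :: "'v set \<Rightarrow> 'e set \<Rightarrow> ('e \<Rightarrow> 'v \<times> 'v) \<Rightarrow> nat" where
  "n_components V E ends = card (V // conn_rel V E ends)"

definition betti1 :: "'v set \<Rightarrow> 'e set \<Rightarrow> ('e \<Rightarrow> 'v \<times> 'v) \<Rightarrow> int" where
  "betti1 V E ends = int (card E) - int (card V) + int (n_components V E ends)"

text \<open>Data: vertices V, edges E with endpoints ends, legs L attached via legv,
genera gen, degrees d, partition V = V0 \<union> Vp (external/internal), slopes m e of
the oriented edge (source to target; the reversed orientation has slope -m e),
coarse contact orders c of the legs.\<close>

definition zhat_tropical_type ::
  "nat \<Rightarrow> 'v set \<Rightarrow> 'e set \<Rightarrow> ('e \<Rightarrow> 'v \<times> 'v) \<Rightarrow> 'l set \<Rightarrow> ('l \<Rightarrow> 'v)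
   \<Rightarrow> ('v \<Rightarrow> nat) \<Rightarrow> ('v \<Rightarrow> int) \<Rightarrow> 'v set \<Rightarrow> 'v set \<Rightarrow> ('e \<Rightarrow> zhat) \<Rightarrow> ('l \<Rightarrow> zhat) \<Rightarrow> bool"
where
  "zhat_tropical_type g V E ends L legv gen d V0 Vp m c \<longleftrightarrow>
     finite V \<and> finite E \<and> finite L \<and>
     (\<forall>e\<in>E. fst (ends e) \<in> V \<and> snd (ends e) \<in> V) \<and>
     (\<forall>i\<in>L. legv i \<in> V) \<and>
     int (\<Sum>v\<in>V. gen v) + betti1 V E ends = int g \<and>
     V0 \<union> Vp = V \<and> V0 \<inter> Vp = {} \<and>
     (\<forall>e\<in>E. m e \<in> Zhat) \<and> (\<forall>i\<in>L. c i \<in> Zhat) \<and>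
     (\<forall>v\<in>V. zhat_of_int (d v) =
        zhat_add
          (zhat_add (zhat_sum m {e\<in>E. fst (ends e) = v})
                    (zhat_sum (\<lambda>e. zhat_neg (m e)) {e\<in>E. snd (ends e) = v}))
          (zhat_sum c {i\<in>L. legv i = v}))"

definition induces_essential_types ::
  "'e set \<Rightarrow> ('e \<Rightarrow> 'v \<times> 'v) \<Rightarrow> ('v \<Rightarrow> nat) \<Rightarrow> 'v set \<Rightarrow> 'v set \<Rightarrow> bool" where
  "induces_essential_types E ends gen V0 Vp \<longleftrightarrow>
     (\<forall>e\<in>E. (fst (ends e) \<in> V0 \<and> snd (ends e) \<in> Vp) \<or> (fst (ends e) \<in> Vp \<and> snd (ends e) \<in> V0)) \<and>
     (\<forall>v\<in>Vp. gen v > 0)"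

definition k_hat :: "'v set \<Rightarrow> 'e set \<Rightarrow> ('e \<Rightarrow> 'v \<times> 'v) \<Rightarrow> ('v \<Rightarrow> nat) \<Rightarrow> 'v set \<Rightarrow> int" where
  "k_hat V E ends gen Vp = betti1 V E ends + 2 * int (\<Sum>v\<in>Vp. gen v) - int (card Vp)"

end

theory Submission
  imports Defs
begin

(* Adding one edge to a graph merges at most two connected components, so induction over the
   edges gives |V| <= |E| + #components, i.e. b_1 >= 0.  The rest is arithmetic: internal
   vertices have positive genus, so |V_+| <= S := sum of g_v over V_+ <= g - b_1.  Hence
   k = b_1 + 2S - |V_+| >= b_1 + S >= 0; if V_+ is nonempty then k <= 2(b_1 + S) - 1 <= 2g - 1,
   and otherwise k = b_1 <= g. *)

lemma equiv_related_mem_classes_iff: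
  assumes "equiv V r" and "(x, y) \<in> r"
  shows "x \<in> r `` A \<longleftrightarrow> y \<in> r `` A"
  using assms unfolding equiv_def sym_def trans_def by blast

lemma quotient_merge_classes:
  fixes b :: 'a
  assumes r: "equiv V r" and "a \<in> V"
  defines "M \<equiv> r `` {a, b}"
  shows "V // (r \<union> M \<times> M) = insert M (V // r - {r `` {a}, r `` {b}})"
proof -
  have closed: "r `` {x} \<subseteq> M" if "x \<in> M" for x
    using that equiv_related_mem_classes_iff[OF r] unfolding M_def by blast
  have "a \<in> M" using equiv_class_self[OF r \<open>a \<in> V\<close>] unfolding M_def by blast
  show ?thesis
  proof (intro equalityI subsetI)
    fix X assume "X \<in> V // (r \<union> M \<times> M)"
    then obtain x where x: "x \<in> V" "X = (r \<union> M \<times> M) `` {x}" by (rule quotientE)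
    show "X \<in> insert M (V // r - {r `` {a}, r `` {b}})"
    proof (cases "x \<in> M")
      case True
      then show ?thesis using x closed by auto
    next
      case False
      then have "X = r `` {x}" "r `` {x} \<noteq> r `` {a}" "r `` {x} \<noteq> r `` {b}"
        using x equiv_class_self[OF r \<open>x \<in> V\<close>] unfolding M_def by auto
      then show ?thesis using x by (auto intro: quotientI)
    qed
  next
    fix X assume "X \<in> insert M (V // r - {r `` {a}, r `` {b}})"
    then show "X \<in> V // (r \<union> M \<times> M)"
    proof
      assume "X = M"
      then have "X = (r \<union> M \<times> M) `` {a}" using \<open>a \<in> M\<close> closed by auto
      then show ?thesis using \<open>a \<in> V\<close> by (auto intro: quotientI)
    next
      assume X: "X \<in> V // r - {r `` {a}, r `` {b}}"
      then obtain x where x: "x \<in> V" "X = r `` {x}" by (auto elim: quotientE)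
      have "x \<notin> M"
        using X x equiv_class_eq[OF r] unfolding M_def by blast
      then have "X = (r \<union> M \<times> M) `` {x}" using x by auto
      then show ?thesis using x by (auto intro: quotientI)
    qed
  qed
qed

lemma card_quotient_merge_classes:
  fixes b :: 'a
  assumes r: "equiv V r" and "finite V" and "a \<in> V"
  defines "M \<equiv> r `` {a, b}"
  shows "card (V // r) \<le> card (V // (r \<union> M \<times> M)) + 1"
proof -
  let ?A = "r `` {a}" and ?B = "r `` {b}"
  have fin: "finite (V // r)"
    using finite_quotient[OF \<open>finite V\<close>] r by (simp add: equiv_type)
  have "M \<notin> V // r - {?A, ?B}"
  proof
    assume M: "M \<in> V // r - {?A, ?B}"
    have "?A \<in> V // r" using \<open>a \<in> V\<close> by (rule quotientI)
    moreover have "a \<in> M \<inter> ?A" using equiv_class_self[OF r \<open>a \<in> V\<close>] unfolding M_def by blast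
    ultimately show False using quotient_disj[OF r] M by blast
  qed
  then have "card (V // (r \<union> M \<times> M)) = card (V // r - {?A, ?B}) + 1"
    unfolding M_def quotient_merge_classes[OF r \<open>a \<in> V\<close>] using fin by (simp add: M_def)
  moreover have "card (V // r) \<le> card ((V // r - {?A, ?B}) \<union> {?A, ?B})"
    using fin by (intro card_mono) auto
  moreover have "card ((V // r - {?A, ?B}) \<union> {?A, ?B}) \<le> card (V // r - {?A, ?B}) + card {?A, ?B}"
    by (rule card_Un_le)
  moreover have "card {?A, ?B} \<le> 2" by (simp add: card_insert_le_m1)
  ultimately show ?thesis by linarith
qed

definition connectivity :: "'v set \<Rightarrow> ('v \<times> 'v) set \<Rightarrow> ('v \<times> 'v) set" where
  "connectivity V F = Id_on V \<union> (F \<union> F\<inverse>)\<^sup>+"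

lemma conn_rel_eq_connectivity: "conn_rel V E ends = connectivity V (ends ` E)"
proof -
  have "(\<lambda>e. prod.swap (ends e)) ` E = (ends ` E)\<inverse>"
  proof (intro set_eqI iffI)
    fix p assume "p \<in> (\<lambda>e. prod.swap (ends e)) ` E"
    then show "p \<in> (ends ` E)\<inverse>" by (auto simp: prod.swap_def)
  next
    fix p assume "p \<in> (ends ` E)\<inverse>"
    then obtain e where "e \<in> E" "prod.swap p = ends e" by (cases p) auto
    then show "p \<in> (\<lambda>e. prod.swap (ends e)) ` E" by (metis image_eqI swap_swap)
  qed
  then show ?thesis
    unfolding conn_rel_def connectivity_def by simp
qed

lemma equiv_connectivity:
  assumes "F \<subseteq> V \<times> V"
  shows "equiv V (connectivity V F)"
proof -
  have "(F \<union> F\<inverse>)\<^sup>+ \<subseteq> V \<times> V"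
    using assms by (intro trancl_subset_Sigma) auto
  moreover have "sym ((F \<union> F\<inverse>)\<^sup>+)"
    by (intro sym_trancl) (auto simp: sym_def)
  ultimately show ?thesis
    unfolding connectivity_def equiv_def refl_on_def sym_def trans_def
    by (auto intro: trancl_trans)
qed

lemma connectivity_mono: "F \<subseteq> G \<Longrightarrow> connectivity V F \<subseteq> connectivity V G"
  unfolding connectivity_def by (metis Un_mono converse_mono subset_refl trancl_mono_subset)

lemma connectivity_least:
  assumes "Id_on V \<subseteq> s" and "F \<subseteq> s" and "sym s" and "trans s"
  shows "connectivity V F \<subseteq> s"
proof -
  have "F \<union> F\<inverse> \<subseteq> s" using assms(2,3) by (auto dest: symD)
  then have "(F \<union> F\<inverse>)\<^sup>+ \<subseteq> s" using \<open>trans s\<close> by (metis trancl_id trancl_mono_subset)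
  with assms(1) show ?thesis unfolding connectivity_def by blast
qed

lemma connectivity_insert:
  assumes F: "F \<subseteq> V \<times> V" and "a \<in> V" and "b \<in> V"
  defines "r \<equiv> connectivity V F"
  defines "M \<equiv> r `` {a, b}"
  shows "connectivity V (insert (a, b) F) = r \<union> M \<times> M"
proof
  let ?r' = "connectivity V (insert (a, b) F)"
  have r': "equiv V ?r'" using F \<open>a \<in> V\<close> \<open>b \<in> V\<close> by (intro equiv_connectivity) auto
  have "r \<subseteq> ?r'" unfolding r_def by (rule connectivity_mono) blast
  moreover have "(a, b) \<in> ?r'" unfolding connectivity_def by blast
  ultimately have "M \<subseteq> ?r' `` {a}"
    unfolding M_def using equiv_class_eq[OF r' \<open>(a, b) \<in> ?r'\<close>] by blast
  then have "M \<times> M \<subseteq> ?r'" using equiv_class_eq[OF r'] by blast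
  with \<open>r \<subseteq> ?r'\<close> show "r \<union> M \<times> M \<subseteq> ?r'" by blast
next
  have r: "equiv V r" unfolding r_def using F by (rule equiv_connectivity)
  have "a \<in> M" "b \<in> M"
    using equiv_class_self[OF r \<open>a \<in> V\<close>] equiv_class_self[OF r \<open>b \<in> V\<close>] unfolding M_def by auto
  moreover have "F \<subseteq> r" unfolding r_def connectivity_def by auto
  ultimately have "insert (a, b) F \<subseteq> r \<union> M \<times> M" by blast
  moreover have "Id_on V \<subseteq> r" unfolding r_def connectivity_def by blast
  moreover have "sym (r \<union> M \<times> M)" using r by (auto simp: equiv_def sym_def)
  moreover have "trans (r \<union> M \<times> M)"
  proof (rule transI)
    fix x y z assume xy: "(x, y) \<in> r \<union> M \<times> M" and yz: "(y, z) \<in> r \<union> M \<times> M"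
    have "x \<in> M \<longleftrightarrow> y \<in> M" if "(x, y) \<in> r" for x y
      unfolding M_def using equiv_related_mem_classes_iff[OF r that] .
    with xy yz have "x \<in> M \<longleftrightarrow> z \<in> M" by blast
    moreover have "trans r" using r by (simp add: equiv_def)
    ultimately show "(x, z) \<in> r \<union> M \<times> M"
      using xy yz transD[OF \<open>trans r\<close>] by blast
  qed
  ultimately show "connectivity V (insert (a, b) F) \<subseteq> r \<union> M \<times> M"
    by (intro connectivity_least) auto
qed

lemma card_le_card_plus_card_components:
  assumes "finite V" and "finite F" and "F \<subseteq> V \<times> V"
  shows "card V \<le> card F + card (V // connectivity V F)"
  using assms(2,3)
proof (induction F rule: finite_induct)
  case empty
  have "V // connectivity V {} = (\<lambda>x. {x}) ` V"
    unfolding connectivity_def quotient_def by auto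
  then show ?case by (simp add: card_image)
next
  case (insert p F)
  obtain a b where p: "p = (a, b)" by (cases p)
  with insert.prems have F: "F \<subseteq> V \<times> V" and "a \<in> V" "b \<in> V" by auto
  have "card (V // connectivity V F) \<le> card (V // connectivity V (insert p F)) + 1"
    unfolding p connectivity_insert[OF F \<open>a \<in> V\<close> \<open>b \<in> V\<close>]
    using equiv_connectivity[OF F] \<open>finite V\<close> \<open>a \<in> V\<close>
    by (rule card_quotient_merge_classes)
  with insert.IH[OF F] insert.hyps show ?case by simp
qed

lemma betti1_nonneg:
  assumes "finite V" and "finite E" and "\<forall>e\<in>E. fst (ends e) \<in> V \<and> snd (ends e) \<in> V"
  shows "0 \<le> betti1 V E ends"
proof -
  have "ends ` E \<subseteq> V \<times> V" using assms(3) by (auto simp: mem_Times_iff image_subset_iff)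
  with assms(1,2) have "card V \<le> card (ends ` E) + n_components V E ends"
    unfolding n_components_def conn_rel_eq_connectivity
    by (intro card_le_card_plus_card_components) auto
  moreover have "card (ends ` E) \<le> card E" using assms(2) by (rule card_image_le)
  ultimately show ?thesis unfolding betti1_def by linarith
qed

theorem lemma3p5p5:
  fixes g :: nat and V :: "'v set" and E :: "'e set" and ends :: "'e \<Rightarrow> 'v \<times> 'v"
    and L :: "'l set" and legv :: "'l \<Rightarrow> 'v" and gen :: "'v \<Rightarrow> nat" and d :: "'v \<Rightarrow> int"
    and V0 Vp :: "'v set" and m :: "'e \<Rightarrow> zhat" and c :: "'l \<Rightarrow> zhat"
  assumes "zhat_tropical_type g V E ends L legv gen d V0 Vp m c"
    and "induces_essential_types E ends gen V0 Vp"
  shows "0 \<le> k_hat V E ends gen Vp \<and> k_hat V E ends gen Vp \<le> max (2 * int g - 1) 0"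
proof -
  note T = assms(1)[unfolded zhat_tropical_type_def]
  have "Vp \<subseteq> V" and "finite V" using T by auto
  have "0 \<le> betti1 V E ends" using T by (intro betti1_nonneg) auto
  moreover have "int (\<Sum>v\<in>V. gen v) + betti1 V E ends = int g" using T by blast
  moreover have "(\<Sum>v\<in>Vp. gen v) \<le> (\<Sum>v\<in>V. gen v)"
    using \<open>Vp \<subseteq> V\<close> \<open>finite V\<close> by (intro sum_mono2) auto
  moreover have "card Vp \<le> (\<Sum>v\<in>Vp. gen v)"
    using assms(2) unfolding induces_essential_types_def card_eq_sum
    by (intro sum_mono) (auto simp: Suc_le_eq)
  moreover have "card Vp = 0 \<longrightarrow> (\<Sum>v\<in>Vp. gen v) = 0"
    using \<open>Vp \<subseteq> V\<close> \<open>finite V\<close> finite_subset by fastforce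
  ultimately show ?thesis unfolding k_hat_def by linarith
qed

end
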